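(* Let $m\ge 2$ and $\alpha\in[0,1]$. For elections with $m$ alternatives, the price of ignoring intensities under voluntary elicitation satisfies $$\mathsf{PoII}^v(\alpha)\ge\frac{3}{2\alpha^{\lfloor m/2\rfloor}+1}.$$
   Context: An election $\mathcal E=(N,A,\vec\sigma)$ has agents $N$, alternatives $A$ with $|A|=m$, and $\sigma_i=(\pi_i,\Join_i)$, where $\pi_i:[m]\to A$ is a bijection ($\pi_i(1)$ most preferred) and $\Join_i:[m-1]\to\{\succ,\succ\!\!\succ\}$. We write $\vec\pi$ for the ranking part of the profile. A metric $d$ on $N\cup A$ is nonnegative and symmetric, satisfies the triangle inequality, and has $d(x,x)=0$. The profile $\vec\sigma$ is $\alpha$-consistent with $d$ under voluntary elicitation if: - every agent $i$ has $d(i,\pi_i(j))\le d(i,\pi_i(j+1))$ for all $j\in[m-1]$; - whenever $\Join_i(j)=\,\succ\!\!\succ$, we have $d(i,\pi_i(j))\le\alpha\, d(i,\pi_i(j+1))$. Let $\mathsf{dist}^v_\alpha(a,\mathcal E)=\sup_d\sum_i d(i,a)/\min_b\sum_i d(i,b)$, with the supremum over metrics $d$ with which $\vec\sigma$ is $\alpha$-consistent under voluntary elicitation. The price of ignoring intensities is defined as follows. - $\mathsf{PoII}^v(a,\mathcal E,\alpha)=\mathsf{dist}^v_\alpha(a,\mathcal E)/\min_{b\in A}\mathsf{dist}^v_\alpha(b,\mathcal E)$. - $\mathsf{PoII}^v(a,\vec\pi,\alpha)=\max_{\mathcal E}\mathsf{PoII}^v(a,\mathcal E,\alpha)$, where the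 maximum is over elections with the same agents and alternatives and ranking part $\vec\pi$ (with arbitrary intensities). - $\mathrm{opt}^{v\text{-}\mathrm{ob}}_\alpha(\vec\pi)\in\arg\min_a\mathsf{PoII}^v(a,\vec\pi,\alpha)$. - $\mathsf{PoII}^v(\mathcal E,\alpha)=\mathsf{PoII}^v(\mathrm{opt}^{v\text{-}\mathrm{ob}}_\alpha(\vec\pi),\mathcal E,\alpha)$. - $\mathsf{PoII}^v(\alpha)=\sup_{\mathcal E}\mathsf{PoII}^v(\mathcal E,\alpha)$ over all elections with $m$ alternatives. *)

theory Defs
  imports "HOL-Analysis.Analysis" "HOL-Library.Extended_Real"
begin

text \<open>Elections: agents are 0..<n, alternatives are 0..<m.
  A profile consists of rankings p :: nat => nat => nat, where p i is a bijection
  from positions 1..m onto the alternatives (p i 1 is most preferred), and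
  intensities J :: nat => nat => bool, where J i j (for j in 1..m-1) is True iff the
  j-th separator of agent i is the strong one (succ succ), False iff it is succ.
  Metrics live on the disjoint union N + A, encoded as nat + nat (Inl = agent,
  Inr = alternative).\<close>

definition valid_ranking :: "nat \<Rightarrow> nat \<Rightarrow> (nat \<Rightarrow> nat \<Rightarrow> nat) \<Rightarrow> bool" where
  "valid_ranking n m p \<longleftrightarrow> (\<forall>i<n. bij_betw (p i) {1..m} {..<m})"

definition points :: "nat \<Rightarrow> nat \<Rightarrow> (nat + nat) set" where
  "points n m = Inl ` {..<n} \<union> Inr ` {..<m}"

definition is_metric_on :: "(nat + nat) set \<Rightarrow> (nat + nat \<Rightarrow> nat + nat \<Rightarrow> real) \<Rightarrow> bool" where
  "is_metric_on S d \<longleftrightarrow>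
     (\<forall>x\<in>S. \<forall>y\<in>S. 0 \<le> d x y \<and> d x y = d y x) \<and>
     (\<forall>x\<in>S. d x x = 0) \<and>
     (\<forall>x\<in>S. \<forall>y\<in>S. \<forall>z\<in>S. d x z \<le> d x y + d y z)"

definition consistent_v ::
  "real \<Rightarrow> nat \<Rightarrow> nat \<Rightarrow> (nat \<Rightarrow> nat \<Rightarrow> nat) \<Rightarrow> (nat \<Rightarrow> nat \<Rightarrow> bool)
   \<Rightarrow> (nat + nat \<Rightarrow> nat + nat \<Rightarrow> real) \<Rightarrow> bool" where
  "consistent_v \<alpha> n m p J d \<longleftrightarrow>
     is_metric_on (points n m) d \<and>
     (\<forall>i<n. \<forall>j\<in>{1..<m}. d (Inl i) (Inr (p i j)) \<le> d (Inl i) (Inr (p i (j+1)))) \<and>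
     (\<forall>i<n. \<forall>j\<in>{1..<m}. J i j \<longrightarrow>
        d (Inl i) (Inr (p i j)) \<le> \<alpha> * d (Inl i) (Inr (p i (j+1))))"

definition social_cost :: "nat \<Rightarrow> (nat + nat \<Rightarrow> nat + nat \<Rightarrow> real) \<Rightarrow> nat \<Rightarrow> real" where
  "social_cost n d a = (\<Sum>i<n. d (Inl i) (Inr a))"

definition opt_cost :: "nat \<Rightarrow> nat \<Rightarrow> (nat + nat \<Rightarrow> nat + nat \<Rightarrow> real) \<Rightarrow> real" where
  "opt_cost n m d = Min (social_cost n d ` {..<m})"

definition cost_ratio :: "real \<Rightarrow> real \<Rightarrow> ereal" where
  "cost_ratio x y = (if y > 0 then ereal (x / y) else if x = 0 then 1 else \<infinity>)"

definition distortion_v ::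
  "real \<Rightarrow> nat \<Rightarrow> nat \<Rightarrow> (nat \<Rightarrow> nat \<Rightarrow> nat) \<Rightarrow> (nat \<Rightarrow> nat \<Rightarrow> bool) \<Rightarrow> nat \<Rightarrow> ereal" where
  "distortion_v \<alpha> n m p J a =
     Sup {cost_ratio (social_cost n d a) (opt_cost n m d) | d. consistent_v \<alpha> n m p J d}"

definition PoII_election ::
  "real \<Rightarrow> nat \<Rightarrow> nat \<Rightarrow> (nat \<Rightarrow> nat \<Rightarrow> nat) \<Rightarrow> (nat \<Rightarrow> nat \<Rightarrow> bool) \<Rightarrow> nat \<Rightarrow> ereal" where
  "PoII_election \<alpha> n m p J a =
     distortion_v \<alpha> n m p J a / Min ((\<lambda>b. distortion_v \<alpha> n m p J b) ` {..<m})"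

definition PoII_ranking ::
  "real \<Rightarrow> nat \<Rightarrow> nat \<Rightarrow> (nat \<Rightarrow> nat \<Rightarrow> nat) \<Rightarrow> nat \<Rightarrow> ereal" where
  "PoII_ranking \<alpha> n m p a = (SUP J. PoII_election \<alpha> n m p J a)"

definition is_opt_ob ::
  "real \<Rightarrow> nat \<Rightarrow> nat \<Rightarrow> (nat \<Rightarrow> nat \<Rightarrow> nat) \<Rightarrow> nat \<Rightarrow> bool" where
  "is_opt_ob \<alpha> n m p a \<longleftrightarrow>
     a < m \<and> (\<forall>b<m. PoII_ranking \<alpha> n m p a \<le> PoII_ranking \<alpha> n m p b)"

text \<open>PoII^v(alpha) for m alternatives, with respect to a selection rule opt mapping
  (number of agents, ranking profile) to an alternative.\<close>
definition PoII_v ::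
  "real \<Rightarrow> nat \<Rightarrow> (nat \<Rightarrow> (nat \<Rightarrow> nat \<Rightarrow> nat) \<Rightarrow> nat) \<Rightarrow> ereal" where
  "PoII_v \<alpha> m opt =
     Sup {PoII_election \<alpha> n m p J (opt n p) | n p J. n \<ge> 1 \<and> valid_ranking n m p}"

end

theory Submission
  imports Defs
begin

text \<open>Take two agents and \<open>k = m div 2\<close>: agent 0 ranks a block \<open>X\<close> of \<open>k\<close>
  alternatives above a block \<open>Y\<close> of \<open>k\<close> alternatives, agent 1 ranks \<open>Y\<close> above \<open>X\<close>,
  both in the same order inside the blocks. Whatever alternative \<open>b\<close> a rule picks from the
  rankings alone, \<open>b\<close> lies outside the top block of some agent \<open>i\<close>; declare the first \<open>k\<close>
  separators of agent \<open>i\<close> strong. Then the top choice \<open>w\<close> of \<open>i\<close> has distortion at most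
  \<open>1 + 2 \<alpha>^k\<close>: against an alternative below the block, \<open>d(i, w) \<le> \<alpha>^k d(i, z)\<close> by the strong
  separators and the triangle inequality through \<open>z\<close> bounds the other agent; an alternative
  inside the block is dominated by \<open>w\<close> for both agents. On the other hand, the line metric
  placing agent \<open>i\<close> and its top block at 0, the other agent at 1 and all remaining alternatives
  at 2 is consistent with these intensities and gives \<open>b\<close> distortion at least 3.\<close>

definition strong_prefix :: "nat \<Rightarrow> nat \<Rightarrow> nat \<Rightarrow> nat \<Rightarrow> bool" where
  "strong_prefix i k = (\<lambda>i' j. i' = i \<and> j \<le> k)"

lemma metric_on_points_nonneg:
  assumes "is_metric_on (points n m) d" "i < n" "a < m"
  shows "0 \<le> d (Inl i) (Inr a)"
  using assms unfolding is_metric_on_def points_def by blast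

lemma metric_on_points_triangle:
  assumes "is_metric_on (points n m) d" "i < n" "i' < n" "a < m" "z < m"
  shows "d (Inl i) (Inr a) \<le> d (Inl i) (Inr z) + d (Inl i') (Inr z) + d (Inl i') (Inr a)"
proof -
  have pts: "Inl i \<in> points n m" "Inl i' \<in> points n m" "Inr a \<in> points n m" "Inr z \<in> points n m"
    using assms by (auto simp: points_def)
  have "d (Inl i) (Inr a) \<le> d (Inl i) (Inr z) + d (Inr z) (Inr a)"
    and "d (Inr z) (Inr a) \<le> d (Inr z) (Inl i') + d (Inl i') (Inr a)"
    and "d (Inr z) (Inl i') = d (Inl i') (Inr z)"
    using assms(1) pts unfolding is_metric_on_def by metis+
  then show ?thesis by linarith
qed

lemma valid_ranking_less:
  assumes "valid_ranking n m p" "i < n" "j \<in> {1..m}"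
  shows "p i j < m"
  using assms bij_betw_apply unfolding valid_ranking_def by fastforce

lemma social_cost_nonneg:
  assumes "is_metric_on (points n m) d" "a < m"
  shows "0 \<le> social_cost n d a"
  unfolding social_cost_def
  by (intro sum_nonneg) (use metric_on_points_nonneg[OF assms(1) _ assms(2)] in simp)

lemma social_cost_two:
  assumes "i < 2"
  shows "social_cost 2 d a = d (Inl i) (Inr a) + d (Inl (1 - i)) (Inr a)"
  using assms by (auto simp: social_cost_def numeral_2_eq_2 less_Suc_eq)

lemma consistent_v_rank_mono:
  assumes "consistent_v \<alpha> n m p J d" "i < n" "1 \<le> j" "j \<le> j'" "j' \<le> m"
  shows "d (Inl i) (Inr (p i j)) \<le> d (Inl i) (Inr (p i j'))"
  using assms(4,5)
proof (induction j' rule: dec_induct)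
  case (step t)
  then have "d (Inl i) (Inr (p i t)) \<le> d (Inl i) (Inr (p i (t + 1)))"
    using assms(1-3) unfolding consistent_v_def by auto
  with step show ?case by simp
qed simp

lemma consistent_v_strong_prefix:
  assumes "consistent_v \<alpha> n m p (strong_prefix i k) d" "0 \<le> \<alpha>" "i < n" "t \<le> k" "t < m"
  shows "d (Inl i) (Inr (p i 1)) \<le> \<alpha> ^ t * d (Inl i) (Inr (p i (t + 1)))"
  using assms(4,5)
proof (induction t)
  case (Suc t)
  have "t + 1 \<in> {1..<m}" "strong_prefix i k i (t + 1)"
    using Suc.prems by (auto simp: strong_prefix_def)
  then have "d (Inl i) (Inr (p i (t + 1))) \<le> \<alpha> * d (Inl i) (Inr (p i (t + 2)))"
    using assms(1,3) unfolding consistent_v_def by fastforce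
  then have "\<alpha> ^ t * d (Inl i) (Inr (p i (t + 1))) \<le> \<alpha> ^ t * (\<alpha> * d (Inl i) (Inr (p i (t + 2))))"
    by (rule mult_left_mono) (simp add: assms(2))
  with Suc show ?case by (simp add: mult_ac)
qed simp

lemma distortion_v_ge_cost_ratio:
  assumes "consistent_v \<alpha> n m p J d"
  shows "cost_ratio (social_cost n d a) (opt_cost n m d) \<le> distortion_v \<alpha> n m p J a"
  unfolding distortion_v_def by (rule Sup_upper) (use assms in blast)

lemma distortion_v_ge_1:
  assumes "0 < m"
  shows "1 \<le> distortion_v \<alpha> n m p J a"
proof -
  have "consistent_v \<alpha> n m p J (\<lambda>_ _. 0)"
    unfolding consistent_v_def is_metric_on_def by simp
  moreover have "opt_cost n m (\<lambda>_ _. 0) = 0"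
    using assms unfolding opt_cost_def social_cost_def
    by (simp add: image_constant_conv lessThan_empty_iff)
  ultimately show ?thesis
    using distortion_v_ge_cost_ratio[of \<alpha> n m p J "\<lambda>_ _. 0" a]
    by (simp add: cost_ratio_def social_cost_def)
qed

lemma distortion_v_le:
  assumes "1 \<le> C" "g < m"
    and approx: "\<And>d z. consistent_v \<alpha> n m p J d \<Longrightarrow> z < m \<Longrightarrow> social_cost n d g \<le> C * social_cost n d z"
  shows "distortion_v \<alpha> n m p J g \<le> ereal C"
  unfolding distortion_v_def
proof (rule Sup_least)
  fix r assume "r \<in> {cost_ratio (social_cost n d g) (opt_cost n m d) | d. consistent_v \<alpha> n m p J d}"
  then obtain d where r: "r = cost_ratio (social_cost n d g) (opt_cost n m d)"
    and d: "consistent_v \<alpha> n m p J d" by blast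
  have metric: "is_metric_on (points n m) d" using d unfolding consistent_v_def by blast
  have "opt_cost n m d \<in> social_cost n d ` {..<m}"
    unfolding opt_cost_def using \<open>g < m\<close> by (intro Min_in) auto
  then obtain z where "z < m" and opt: "opt_cost n m d = social_cost n d z" by auto
  have le: "social_cost n d g \<le> C * opt_cost n m d" using approx[OF d \<open>z < m\<close>] opt by simp
  have "0 \<le> social_cost n d g" "0 \<le> opt_cost n m d"
    using social_cost_nonneg[OF metric] \<open>g < m\<close> \<open>z < m\<close> opt by auto
  then show "r \<le> ereal C"
    using le \<open>1 \<le> C\<close> unfolding r cost_ratio_def by (auto simp: divide_le_eq)
qed

lemma PoII_election_ge:
  assumes "ereal c \<le> distortion_v \<alpha> n m p J b"
    and "g < m" "distortion_v \<alpha> n m p J g \<le> ereal C" "0 < c"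
  shows "ereal (c / C) \<le> PoII_election \<alpha> n m p J b"
proof -
  define M where "M = Min ((\<lambda>b. distortion_v \<alpha> n m p J b) ` {..<m})"
  have "M \<in> (\<lambda>b. distortion_v \<alpha> n m p J b) ` {..<m}"
    unfolding M_def using \<open>g < m\<close> by (intro Min_in) auto
  then have "1 \<le> M" using distortion_v_ge_1 \<open>g < m\<close> by auto
  moreover have "M \<le> ereal C"
    unfolding M_def using \<open>g < m\<close> assms(3)
    by (meson Min_le finite_imageI finite_lessThan image_eqI lessThan_iff order_trans)
  ultimately obtain r where M: "M = ereal r" and "1 \<le> r" "r \<le> C" by (cases M) auto
  then have "0 < M" by simp
  have "ereal (c / C) \<le> ereal c / M"
    using M \<open>1 \<le> r\<close> \<open>r \<le> C\<close> \<open>0 < c\<close> by (simp add: divide_left_mono)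
  also have "\<dots> \<le> distortion_v \<alpha> n m p J b / M"
    using \<open>0 < M\<close> by (rule ereal_divide_right_mono[OF assms(1)])
  finally show ?thesis unfolding PoII_election_def M_def .
qed

lemma social_cost_top_le:
  assumes d: "consistent_v \<alpha> 2 m p (strong_prefix i k) d"
    and "valid_ranking 2 m p" "0 \<le> \<alpha>" "i < 2" "2 * k \<le> m"
    and shift: "\<forall>j\<in>{1..k}. p (1 - i) (j + k) = p i j"
    and "z < m"
  shows "social_cost 2 d (p i 1) \<le> (1 + 2 * \<alpha> ^ k) * social_cost 2 d z"
proof -
  have metric: "is_metric_on (points 2 m) d" using d unfolding consistent_v_def by blast
  have bij: "bij_betw (p i) {1..m} {..<m}" using assms(2,4) unfolding valid_ranking_def by blast
  obtain jz where jz: "jz \<in> {1..m}" "p i jz = z"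
    using bij \<open>z < m\<close> by (metis bij_betw_imp_surj_on imageE lessThan_iff)
  have "p i 1 < m" using valid_ranking_less assms(2,4) jz by simp
  have z_nonneg: "0 \<le> d (Inl i) (Inr z)" "0 \<le> d (Inl (1 - i)) (Inr z)"
    using metric_on_points_nonneg[OF metric] \<open>i < 2\<close> \<open>z < m\<close> by auto
  consider (far) "k < jz" | (near) "jz \<le> k" by linarith
  then show ?thesis
  proof cases
    case far
    have "d (Inl i) (Inr (p i 1)) \<le> \<alpha> ^ k * d (Inl i) (Inr (p i (k + 1)))"
      using consistent_v_strong_prefix[OF d] assms(3,4) far jz by simp
    also have "\<dots> \<le> \<alpha> ^ k * d (Inl i) (Inr z)"
      using consistent_v_rank_mono[OF d \<open>i < 2\<close>, of "k + 1" jz] far jz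
      by (intro mult_left_mono) (simp_all add: assms(3))
    finally have top: "d (Inl i) (Inr (p i 1)) \<le> \<alpha> ^ k * d (Inl i) (Inr z)" .
    have other: "d (Inl (1 - i)) (Inr (p i 1))
        \<le> d (Inl (1 - i)) (Inr z) + d (Inl i) (Inr z) + d (Inl i) (Inr (p i 1))"
      using metric_on_points_triangle[OF metric] \<open>i < 2\<close> \<open>p i 1 < m\<close> \<open>z < m\<close> by simp
    have "0 \<le> \<alpha> ^ k * d (Inl (1 - i)) (Inr z)" using z_nonneg assms(3) by simp
    with top other show ?thesis
      unfolding social_cost_two[OF \<open>i < 2\<close>] by (simp add: algebra_simps)
  next
    case near
    have top: "d (Inl i) (Inr (p i 1)) \<le> d (Inl i) (Inr z)"
      using consistent_v_rank_mono[OF d \<open>i < 2\<close>, of 1 jz] jz by simp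
    have "d (Inl (1 - i)) (Inr (p (1 - i) (1 + k))) \<le> d (Inl (1 - i)) (Inr (p (1 - i) (jz + k)))"
      using consistent_v_rank_mono[OF d] \<open>i < 2\<close> near jz \<open>2 * k \<le> m\<close> by simp
    moreover have "p (1 - i) (1 + k) = p i 1" "p (1 - i) (jz + k) = p i jz"
      using shift[rule_format, of 1] shift[rule_format, of jz] near jz by auto
    ultimately have other: "d (Inl (1 - i)) (Inr (p i 1)) \<le> d (Inl (1 - i)) (Inr z)"
      using jz by simp
    have "0 \<le> \<alpha> ^ k * social_cost 2 d z"
      using social_cost_nonneg[OF metric \<open>z < m\<close>] assms(3) by simp
    with top other show ?thesis
      unfolding social_cost_two[OF \<open>i < 2\<close>] by (simp add: algebra_simps)
  qed
qed

lemma distortion_v_top_le: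
  assumes "valid_ranking 2 m p" "0 \<le> \<alpha>" "i < 2" "2 * k \<le> m" "0 < m"
    and "\<forall>j\<in>{1..k}. p (1 - i) (j + k) = p i j"
  shows "distortion_v \<alpha> 2 m p (strong_prefix i k) (p i 1) \<le> ereal (1 + 2 * \<alpha> ^ k)"
proof (rule distortion_v_le)
  show "p i 1 < m" using valid_ranking_less assms(1,3,5) by simp
qed (use social_cost_top_le[OF _ assms(1-4,6)] assms(2) in auto)

definition line_metric :: "('a \<Rightarrow> real) \<Rightarrow> 'a \<Rightarrow> 'a \<Rightarrow> real" where
  "line_metric f u v = \<bar>f u - f v\<bar>"

definition line_coord :: "nat \<Rightarrow> nat set \<Rightarrow> nat + nat \<Rightarrow> real" where
  "line_coord i S u = (case u of Inl i' \<Rightarrow> if i' = i then 0 else 1 | Inr a \<Rightarrow> if a \<in> S then 0 else 2)"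

lemma is_metric_on_line_metric: "is_metric_on S (line_metric f)"
  unfolding is_metric_on_def line_metric_def by auto

lemma social_cost_line_coord:
  assumes "i < 2"
  shows "social_cost 2 (line_metric (line_coord i S)) a = (if a \<in> S then 1 else 3)"
proof -
  have "1 - i \<noteq> i" using assms by arith
  then show ?thesis by (simp add: social_cost_two[OF assms] line_metric_def line_coord_def)
qed

lemma opt_cost_line_coord:
  assumes "i < 2" "a \<in> S" "a < m"
  shows "opt_cost 2 m (line_metric (line_coord i S)) = 1"
  unfolding opt_cost_def
proof (rule Min_eqI)
  show "1 \<in> social_cost 2 (line_metric (line_coord i S)) ` {..<m}"
    using assms social_cost_line_coord[OF assms(1), of S a] by force
qed (use social_cost_line_coord[OF assms(1)] in auto)

lemma consistent_v_line_coord: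
  assumes "valid_ranking 2 m p" "i < 2" "0 \<le> \<alpha>" "k \<le> m"
  shows "consistent_v \<alpha> 2 m p (strong_prefix i k) (line_metric (line_coord i (p i ` {1..k})))"
proof -
  have top: "p i j \<in> p i ` {1..k} \<longleftrightarrow> j \<le> k" if "j \<in> {1..m}" for j
    using assms(1,2,4) that unfolding valid_ranking_def
    by (subst inj_on_image_mem_iff[of _ "{1..m}"]) (auto dest: bij_betw_imp_inj_on)
  have "j + 1 \<in> {1..m}" if "j \<in> {1..<m}" for j using that by simp
  with top show ?thesis
    using assms(2,3) unfolding consistent_v_def
    by (auto simp: is_metric_on_line_metric line_metric_def line_coord_def strong_prefix_def)
qed

lemma distortion_v_outside_top_ge:
  assumes "valid_ranking 2 m p" "i < 2" "0 \<le> \<alpha>" "1 \<le> k" "k \<le> m"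
    and "b \<notin> p i ` {1..k}"
  shows "3 \<le> distortion_v \<alpha> 2 m p (strong_prefix i k) b"
proof -
  have "p i 1 < m" using valid_ranking_less assms(1,2,4,5) by simp
  then have "opt_cost 2 m (line_metric (line_coord i (p i ` {1..k}))) = 1"
    using assms(2,4) by (intro opt_cost_line_coord) auto
  then show ?thesis
    using distortion_v_ge_cost_ratio[OF consistent_v_line_coord[OF assms(1-3,5)], of b] assms(6)
    by (simp add: social_cost_line_coord[OF assms(2)] cost_ratio_def)
qed

lemma PoII_election_le_PoII_v:
  assumes "1 \<le> n" "valid_ranking n m p"
  shows "PoII_election \<alpha> n m p J (opt n p) \<le> PoII_v \<alpha> m opt"
  unfolding PoII_v_def
proof (rule Sup_upper)
  show "PoII_election \<alpha> n m p J (opt n p)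
      \<in> {PoII_election \<alpha> n m p J (opt n p) | n p J. n \<ge> 1 \<and> valid_ranking n m p}"
    using assms by auto
qed

text \<open>Agent 0 ranks \<open>0, 1, \<dots>, m - 1\<close>; agent 1 swaps the blocks \<open>{..<k}\<close> and
  \<open>{k..<2 * k}\<close> of this ranking, where \<open>k = m div 2\<close>.\<close>

definition block_swap_profile :: "nat \<Rightarrow> nat \<Rightarrow> nat \<Rightarrow> nat" where
  "block_swap_profile m i j =
     (if i = 0 \<or> 2 * (m div 2) < j then j - 1
      else if j \<le> m div 2 then j + m div 2 - 1 else j - m div 2 - 1)"

lemma valid_ranking_block_swap_profile: "valid_ranking 2 m (block_swap_profile m)"
proof -
  have "bij_betw (block_swap_profile m 0) {1..m} {..<m}"
    by (rule bij_betw_byWitness[where f' = "\<lambda>a. a + 1"]) (auto simp: block_swap_profile_def)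
  moreover have "bij_betw (block_swap_profile m 1) {1..m} {..<m}"
    by (rule bij_betw_byWitness[where f' = "\<lambda>a. if a < m div 2 then a + m div 2 + 1
        else if a < 2 * (m div 2) then a - m div 2 + 1 else a + 1"])
      (auto simp: block_swap_profile_def)
  ultimately show ?thesis
    unfolding valid_ranking_def by (auto simp: less_Suc_eq numeral_2_eq_2)
qed

lemma block_swap_profile_shift:
  assumes "i < 2" "j \<in> {1..m div 2}"
  shows "block_swap_profile m (1 - i) (j + m div 2) = block_swap_profile m i j"
  using assms by (auto simp: block_swap_profile_def less_Suc_eq numeral_2_eq_2)

lemma block_swap_profile_avoids_top_block:
  obtains i where "i < 2" "b \<notin> block_swap_profile m i ` {1..m div 2}"
proof -
  have "block_swap_profile m 0 ` {1..m div 2} \<inter> block_swap_profile m 1 ` {1..m div 2} = {}"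
    by (auto simp: block_swap_profile_def)
  then show thesis using that[of 0] that[of 1] by auto
qed

theorem theorem10:
  fixes m :: nat and \<alpha> :: real
    and opt :: "nat \<Rightarrow> (nat \<Rightarrow> nat \<Rightarrow> nat) \<Rightarrow> nat"
  assumes "m \<ge> 2" and "0 \<le> \<alpha>" and "\<alpha> \<le> 1"
    and "\<forall>n p. n \<ge> 1 \<and> valid_ranking n m p \<longrightarrow> is_opt_ob \<alpha> n m p (opt n p)"
  shows "PoII_v \<alpha> m opt \<ge> ereal (3 / (2 * \<alpha> ^ (m div 2) + 1))"
proof -
  define k where "k = m div 2"
  define p where "p = block_swap_profile m"
  have valid: "valid_ranking 2 m p" unfolding p_def by (rule valid_ranking_block_swap_profile)
  have "1 \<le> k" "2 * k \<le> m" "0 < m" using assms(1) unfolding k_def by auto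
  obtain i where "i < 2" and outside: "opt 2 p \<notin> p i ` {1..k}"
    using block_swap_profile_avoids_top_block unfolding p_def k_def .
  have shift: "\<forall>j\<in>{1..k}. p (1 - i) (j + k) = p i j"
    using block_swap_profile_shift[OF \<open>i < 2\<close>] unfolding p_def k_def by blast
  have "ereal 3 \<le> distortion_v \<alpha> 2 m p (strong_prefix i k) (opt 2 p)"
    using distortion_v_outside_top_ge[OF valid \<open>i < 2\<close> assms(2) \<open>1 \<le> k\<close> _ outside] \<open>2 * k \<le> m\<close>
    by simp
  moreover have "p i 1 < m" using valid_ranking_less[OF valid \<open>i < 2\<close>] \<open>0 < m\<close> by simp
  moreover have "distortion_v \<alpha> 2 m p (strong_prefix i k) (p i 1) \<le> ereal (1 + 2 * \<alpha> ^ k)"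
    by (rule distortion_v_top_le[OF valid assms(2) \<open>i < 2\<close> \<open>2 * k \<le> m\<close> \<open>0 < m\<close> shift])
  ultimately have "ereal (3 / (1 + 2 * \<alpha> ^ k)) \<le> PoII_election \<alpha> 2 m p (strong_prefix i k) (opt 2 p)"
    by (rule PoII_election_ge) simp
  also have "\<dots> \<le> PoII_v \<alpha> m opt"
    using valid by (intro PoII_election_le_PoII_v) simp_all
  finally show ?thesis unfolding k_def by (simp add: add.commute)
qed

end
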